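(* Let $\lambda_0\in\mathbb D\setminus\{0\}$ and $y^0=(y_1^0,y_2^0,q^0)\in\widetilde{\mathbb G}_3$ with $y^0_1y^0_2\ne9q^0$, $|y^0_2|\le|y^0_1|$ and $\|\Phi_1(\cdot,y^0)\|_{H^\infty}<|\lambda_0|$. For $\nu>0$ let $Z_\nu=\begin{bmatrix}y^0_1/(3\lambda_0)&\nu w\\ \nu^{-1}w&y^0_2/3\end{bmatrix}$, where $w^2=\frac{y^0_1y^0_2-9q^0}{9\lambda_0}$. Let $\theta_1,\theta_2$ be the roots of $z+1/z=\frac{|\lambda_0|}{|y^0_1y^0_2-9q^0|}\left(9-\frac{|y^0_1|^2}{|\lambda_0|^2}-|y^0_2|^2+\frac{9|q^0|^2}{|\lambda_0|^2}\right)$. Then for every $\nu>0$ with $\theta_1<\nu^2<\theta_2$ we have $\|Z_\nu\|<1$ and the matrix $\mathcal K_{Z_\nu}(|\lambda_0|)$ is not positive definite.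
   Context: $\mathbb D$ open unit disc, $\|\cdot\|$ operator norm. $\widetilde{\mathbb G}_3=\{(\beta_1+\bar\beta_2q,\beta_2+\bar\beta_1q,q): q\in\mathbb D,\ |\beta_1|+|\beta_2|<3\}$. For $y=(y_1,y_2,q)$, $\Phi_1(z,y)=\frac{3qz-y_1}{y_2z-3}$ if $y_2z\ne3$ and $y_1y_2\ne9q$, $\Phi_1(z,y)=y_1/3$ if $y_1y_2=9q$; $\|\Phi_1(\cdot,y)\|_{H^\infty}=\sup_{z\in\mathbb D}|\Phi_1(z,y)|$. For a $2\times2$ matrix $Z$ with $\|Z\|<1$ and $0\le\rho<1$, $\mathcal K_Z(\rho)=\begin{bmatrix}[(1-\rho^2Z^*Z)(1-Z^*Z)^{-1}]_{11}&[(1-\rho^2)(1-ZZ^* )^{-1}Z]_{21}\\ [(1-\rho^2)Z^*(1-ZZ^* )^{-1}]_{12}&[(ZZ^*-\rho^2)(1-ZZ^* )^{-1}]_{22}\end{bmatrix}$. *)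

theory Defs
  imports "HOL-Analysis.Analysis"
begin

type_synonym cmat2 = "complex^2^2"

definition adj :: "cmat2 \<Rightarrow> cmat2" where
  "adj Z = (\<chi> i j. cnj (Z $ j $ i))"

definition opnorm :: "cmat2 \<Rightarrow> real" where
  "opnorm Z = onorm (\<lambda>x. Z *v x)"

definition G3t :: "(complex \<times> complex \<times> complex) set" where
  "G3t = {(b1 + cnj b2 * q, b2 + cnj b1 * q, q) | b1 b2 q.
            cmod q < 1 \<and> cmod b1 + cmod b2 < 3}"

definition Phi1 :: "complex \<Rightarrow> complex \<times> complex \<times> complex \<Rightarrow> complex" where
  "Phi1 z y = (case y of (y1, y2, q) \<Rightarrow>
      if y1 * y2 = 9 * q then y1 / 3 else (3 * q * z - y1) / (y2 * z - 3))"

definition Phi1_Hinf :: "complex \<times> complex \<times> complex \<Rightarrow> real" where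
  "Phi1_Hinf y = (SUP z \<in> ball 0 1. cmod (Phi1 z y))"

definition KZ :: "cmat2 \<Rightarrow> real \<Rightarrow> cmat2" where
  "KZ Z r = (let I = (mat 1 :: cmat2);
                 A = (I - (r^2) *\<^sub>R (adj Z ** Z)) ** matrix_inv (I - adj Z ** Z);
                 B = ((1 - r^2) *\<^sub>R matrix_inv (I - Z ** adj Z)) ** Z;
                 C = ((1 - r^2) *\<^sub>R adj Z) ** matrix_inv (I - Z ** adj Z);
                 D = (Z ** adj Z - (r^2) *\<^sub>R I) ** matrix_inv (I - Z ** adj Z)
             in (\<chi> i j. if i = 1 \<and> j = 1 then A $ 1 $ 1
                        else if i = 1 \<and> j = 2 then B $ 2 $ 1
                        else if i = 2 \<and> j = 1 then C $ 1 $ 2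
                        else D $ 2 $ 2))"

definition pos_def :: "cmat2 \<Rightarrow> bool" where
  "pos_def K \<longleftrightarrow> (\<forall>v :: complex^2. v \<noteq> 0 \<longrightarrow>
     (let s = (\<Sum>i\<in>UNIV. \<Sum>j\<in>UNIV. cnj (v $ i) * K $ i $ j * v $ j)
      in Im s = 0 \<and> Re s > 0))"

end

theory Submission
  imports Defs
begin

(* For a 2x2 matrix Z = [a b; c d] put
     Delta = det (1 - Z^* Z) = 1 - (|a|^2 + |b|^2 + |c|^2 + |d|^2) + |ad - bc|^2.
   Then ||Z|| < 1 as soon as Delta > 0 and |det Z| < 1, and inverting 1 - Z^* Z and 1 - Z Z^*
   explicitly shows that K_Z(rho) is Hermitian with
     k11 k22 - |k12|^2 = ((1 - rho^2) (|d|^2 - rho^2 |a|^2) - rho^2 Delta) / Delta,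
   which is not positive when |d| <= rho |a|.
   For Z_nu one finds det Z_nu = q/lambda0 and Delta = |w|^2 (C - nu^2 - 1/nu^2), where C is the
   right-hand side of the equation for theta1, theta2.  Since theta1 theta2 = 1 and
   theta1 + theta2 = C, Delta > 0 exactly for theta1 < nu^2 < theta2.  Finally |q| < |lambda0|
   because |q| <= ||Phi_1(., y)||, as one sees by comparing |Phi_1(u, y)| with |q| at a suitable
   u = 1 or u = -1; and |d| <= |lambda0| |a| is the hypothesis |y2| <= |y1|. *)

definition mat2 :: "'a \<Rightarrow> 'a \<Rightarrow> 'a \<Rightarrow> 'a \<Rightarrow> 'a^2^2" where
  "mat2 a b c d = (\<chi> i j. if i = 1 \<and> j = 1 then a else if i = 1 \<and> j = 2 then b
                         else if i = 2 \<and> j = 1 then c else d)"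

lemma mat2_nth [simp]:
  "mat2 a b c d $ 1 $ 1 = a" "mat2 a b c d $ 1 $ 2 = b"
  "mat2 a b c d $ 2 $ 1 = c" "mat2 a b c d $ 2 $ 2 = d"
  by (simp_all add: mat2_def)

lemma eq_mat2_iff: "A = mat2 a b c d \<longleftrightarrow> A$1$1 = a \<and> A$1$2 = b \<and> A$2$1 = c \<and> A$2$2 = d"
  by (auto simp: vec_eq_iff forall_2)

lemma mat2_mult:
  fixes a b c d e f g h :: "'a::semiring_1"
  shows "mat2 a b c d ** mat2 e f g h = mat2 (a*e + b*g) (a*f + b*h) (c*e + d*g) (c*f + d*h)"
  by (simp add: eq_mat2_iff matrix_matrix_mult_def sum_2)

lemma mat_1_eq_mat2: "(mat 1 :: 'a::zero_neq_one^2^2) = mat2 1 0 0 1"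
  by (simp add: eq_mat2_iff mat_def)

lemma mat2_diff: "mat2 a b c d - mat2 e f g h = mat2 (a - e) (b - f) (c - g) (d - h)"
  by (simp add: eq_mat2_iff)

lemma scaleR_mat2:
  fixes a b c d :: complex
  shows "k *\<^sub>R mat2 a b c d = mat2 (of_real k * a) (of_real k * b) (of_real k * c) (of_real k * d)"
  by (simp add: eq_mat2_iff) (simp add: scaleR_conv_of_real)

lemma adj_mat2: "adj (mat2 a b c d) = mat2 (cnj a) (cnj c) (cnj b) (cnj d)"
  by (simp add: eq_mat2_iff adj_def)

lemma mat2_mult_vec:
  "mat2 a b c d *v x = (\<chi> i. if i = 1 then a * x$1 + b * x$2 else c * x$1 + d * x$2)"
  by (simp add: matrix_vector_mult_def sum_2 vec_eq_iff forall_2)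

lemma norm_vec2_sq: "(norm (x :: complex^2))\<^sup>2 = (cmod (x$1))\<^sup>2 + (cmod (x$2))\<^sup>2"
  by (simp add: norm_vec_def L2_set_def sum_2)

lemma matrix_inv_unique:
  fixes A B :: "'a::comm_ring_1^'n^'n"
  assumes "A ** B = mat 1" "B ** A = mat 1"
  shows "matrix_inv A = B"
proof -
  have inv: "matrix_inv A ** A = mat 1"
    using someI_ex[of "\<lambda>A'. A ** A' = mat 1 \<and> A' ** A = mat 1"] assms
    unfolding matrix_inv_def by blast
  have "matrix_inv A = matrix_inv A ** (A ** B)" by (simp add: assms(1) matrix_mul_rid)
  also have "\<dots> = B" by (simp add: matrix_mul_assoc inv matrix_mul_lid)
  finally show ?thesis .
qed

lemma matrix_inv_mat2:
  fixes A :: "'a::field^2^2"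
  assumes "det A \<noteq> 0"
  shows "matrix_inv A = mat2 (A$2$2 / det A) (- A$1$2 / det A) (- A$2$1 / det A) (A$1$1 / det A)"
proof -
  obtain p q r t where A: "A = mat2 p q r t" by (metis eq_mat2_iff)
  define \<delta> where "\<delta> = p * t - q * r"
  have "\<delta> \<noteq> 0" using assms by (simp add: A det_2 \<delta>_def)
  then have "matrix_inv A = mat2 (t / \<delta>) (- q / \<delta>) (- r / \<delta>) (p / \<delta>)"
    unfolding A by (intro matrix_inv_unique)
      (simp_all add: mat2_mult mat_1_eq_mat2 eq_mat2_iff add_divide_distrib [symmetric]
        diff_divide_distrib [symmetric], simp_all add: \<delta>_def algebra_simps)
  then show ?thesis by (simp add: A det_2 \<delta>_def)
qed

definition det_defect :: "complex \<Rightarrow> complex \<Rightarrow> complex \<Rightarrow> complex \<Rightarrow> real" where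
  "det_defect a b c d =
     1 - ((cmod a)\<^sup>2 + (cmod b)\<^sup>2 + (cmod c)\<^sup>2 + (cmod d)\<^sup>2) + (cmod (a * d - b * c))\<^sup>2"

section \<open>Operator norm of a 2x2 matrix\<close>

lemma cmod_add_mult_sq:
  "(cmod (a * x + b * y))\<^sup>2 =
     (cmod a)\<^sup>2 * (cmod x)\<^sup>2 + (cmod b)\<^sup>2 * (cmod y)\<^sup>2 + 2 * Re (cnj x * y * (cnj a * b))"
  unfolding cmod_power2 by simp algebra

lemma lagrange_identity_complex:
  "(cmod (cnj a * b + cnj c * d))\<^sup>2 =
     ((cmod a)\<^sup>2 + (cmod c)\<^sup>2) * ((cmod b)\<^sup>2 + (cmod d)\<^sup>2) - (cmod (a * d - b * c))\<^sup>2"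
  unfolding cmod_power2 by simp algebra

lemma cmod_det_sq_le:
  "4 * (cmod (a * d - b * c))\<^sup>2 \<le> ((cmod a)\<^sup>2 + (cmod b)\<^sup>2 + (cmod c)\<^sup>2 + (cmod d)\<^sup>2)\<^sup>2"
proof -
  have "cmod (a * d - b * c) \<le> cmod a * cmod d + cmod b * cmod c"
    by (metis norm_mult norm_triangle_ineq4)
  moreover have "2 * (cmod a * cmod d + cmod b * cmod c) \<le>
      (cmod a)\<^sup>2 + (cmod b)\<^sup>2 + (cmod c)\<^sup>2 + (cmod d)\<^sup>2"
    using sum_power2_ge_zero [of "cmod a - cmod d" "cmod b - cmod c"]
    by (simp add: power2_diff algebra_simps)
  ultimately have "(2 * cmod (a * d - b * c))\<^sup>2 \<le> ((cmod a)\<^sup>2 + (cmod b)\<^sup>2 + (cmod c)\<^sup>2 + (cmod d)\<^sup>2)\<^sup>2"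
    by (intro power_mono) simp_all
  then show ?thesis by (simp add: power_mult_distrib)
qed

lemma quadratic_form_nonneg:
  fixes p s r x y :: real
  assumes "0 \<le> p + s" and "r\<^sup>2 \<le> p * s" and "0 \<le> r" and "0 \<le> x" and "0 \<le> y"
  shows "2 * r * x * y \<le> p * x\<^sup>2 + s * y\<^sup>2"
proof -
  have "0 \<le> p * s" using assms(2) zero_le_power2 [of r] by linarith
  then have "0 \<le> p" "0 \<le> s"
    using assms(1) mult_neg_pos [of p s] mult_pos_neg [of p s] by linarith+
  have "(p * x\<^sup>2 + s * y\<^sup>2)\<^sup>2 - (2 * r * x * y)\<^sup>2 =
      (p * x\<^sup>2 - s * y\<^sup>2)\<^sup>2 + 4 * (p * s - r\<^sup>2) * x\<^sup>2 * y\<^sup>2"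
    by (simp add: power2_eq_square algebra_simps)
  moreover have "0 \<le> (p * x\<^sup>2 - s * y\<^sup>2)\<^sup>2 + 4 * (p * s - r\<^sup>2) * x\<^sup>2 * y\<^sup>2"
    using assms(2) by simp
  ultimately have "(2 * r * x * y)\<^sup>2 \<le> (p * x\<^sup>2 + s * y\<^sup>2)\<^sup>2" by linarith
  moreover have "0 \<le> p * x\<^sup>2 + s * y\<^sup>2" using \<open>0 \<le> p\<close> \<open>0 \<le> s\<close> by simp
  ultimately show ?thesis by (rule power2_le_imp_le)
qed

text \<open>The hypotheses say that the trace and the determinant of the Hermitian matrix
  \<open>(1 - e) I - Z\<^sup>* Z\<close> are nonnegative, i.e.\ that \<open>Z\<^sup>* Z \<le> (1 - e) I\<close>.\<close>
lemma norm_mat2_mult_vec_le: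
  fixes a b c d :: complex and e :: real
  defines "p \<equiv> 1 - e - ((cmod a)\<^sup>2 + (cmod c)\<^sup>2)" and "s \<equiv> 1 - e - ((cmod b)\<^sup>2 + (cmod d)\<^sup>2)"
  assumes "e \<le> 1" and "0 \<le> p + s" and "(cmod (cnj a * b + cnj c * d))\<^sup>2 \<le> p * s"
  shows "norm (mat2 a b c d *v x) \<le> sqrt (1 - e) * norm x"
proof -
  define r where "r = cnj a * b + cnj c * d"
  have "Re (cnj (x$1) * x$2 * r) \<le> cmod (x$1) * cmod (x$2) * cmod r"
    by (metis complex_Re_le_cmod norm_mult complex_mod_cnj)
  moreover have "2 * cmod r * cmod (x$1) * cmod (x$2) \<le> p * (cmod (x$1))\<^sup>2 + s * (cmod (x$2))\<^sup>2"
    using assms(4,5) by (intro quadratic_form_nonneg) (simp_all add: r_def)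
  ultimately have "(norm (mat2 a b c d *v x))\<^sup>2 \<le> (1 - e) * (norm x)\<^sup>2"
    by (simp add: norm_vec2_sq mat2_mult_vec cmod_add_mult_sq r_def p_def s_def algebra_simps)
  also have "\<dots> = (sqrt (1 - e) * norm x)\<^sup>2"
    using assms(3) by (simp add: power_mult_distrib)
  finally have "(norm (mat2 a b c d *v x))\<^sup>2 \<le> (sqrt (1 - e) * norm x)\<^sup>2" .
  then show ?thesis by (rule power2_le_imp_le) (simp add: assms(3))
qed

lemma opnorm_mat2_less_one:
  assumes "0 < det_defect a b c d" and "(cmod (a * d - b * c))\<^sup>2 < 1"
  shows "opnorm (mat2 a b c d) < 1"
proof -
  define T where "T = (cmod a)\<^sup>2 + (cmod b)\<^sup>2 + (cmod c)\<^sup>2 + (cmod d)\<^sup>2"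
  define \<Delta> where "\<Delta> = det_defect a b c d"
  have \<Delta>: "\<Delta> = 1 - T + (cmod (a * d - b * c))\<^sup>2"
    by (simp add: \<Delta>_def T_def det_defect_def)
  have "0 < \<Delta>" using assms(1) by (simp add: \<Delta>_def)
  then have "T < 2" using \<Delta> assms(2) by linarith
  \<comment> \<open>chosen so that \<open>det ((1 - e) I - Z\<^sup>* Z) = e\<^sup>2\<close>\<close>
  define e where "e = \<Delta> / (2 - T)"
  have "0 < e" using \<open>0 < \<Delta>\<close> \<open>T < 2\<close> by (simp add: e_def)
  have "4 * \<Delta> \<le> (2 - T)\<^sup>2"
    using cmod_det_sq_le [of a d b c] by (simp add: \<Delta> T_def power2_eq_square algebra_simps)
  then have "4 * e \<le> 2 - T"
    using \<open>T < 2\<close> by (simp add: e_def power2_eq_square pos_divide_le_eq mult.commute)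
  moreover have "0 \<le> T" by (simp add: T_def)
  ultimately have "e < 1" "2 * e \<le> 2 - T" using \<open>0 < e\<close> by linarith+
  have "(cmod (cnj a * b + cnj c * d))\<^sup>2 \<le>
      (1 - e - ((cmod a)\<^sup>2 + (cmod c)\<^sup>2)) * (1 - e - ((cmod b)\<^sup>2 + (cmod d)\<^sup>2))"
  proof -
    have "e * (2 - T) = \<Delta>" using \<open>T < 2\<close> by (simp add: e_def)
    then have "(1 - e - ((cmod a)\<^sup>2 + (cmod c)\<^sup>2)) * (1 - e - ((cmod b)\<^sup>2 + (cmod d)\<^sup>2))
        - (cmod (cnj a * b + cnj c * d))\<^sup>2 = e\<^sup>2"
      unfolding lagrange_identity_complex
      by (simp add: \<Delta> T_def power2_eq_square algebra_simps)
    then show ?thesis using zero_le_power2 [of e] by linarith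
  qed
  then have "norm (mat2 a b c d *v x) \<le> sqrt (1 - e) * norm x" for x
    using \<open>e < 1\<close> \<open>2 * e \<le> 2 - T\<close>
    by (intro norm_mat2_mult_vec_le) (simp_all add: T_def)
  then have "opnorm (mat2 a b c d) \<le> sqrt (1 - e)"
    unfolding opnorm_def by (rule onorm_le)
  also have "\<dots> < 1" using \<open>0 < e\<close> \<open>e < 1\<close> by simp
  finally show ?thesis .
qed

section \<open>The matrix K_Z(rho) of a 2x2 matrix\<close>

lemma of_real_det_defect:
  "of_real (det_defect a b c d) =
     1 - (a * cnj a + b * cnj b + c * cnj c + d * cnj d) + (a * d - b * c) * cnj (a * d - b * c)"
  by (simp only: det_defect_def of_real_add of_real_diff of_real_1 complex_norm_square)

lemma det_one_minus_adj_mult_mat2: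
  "det (mat 1 - adj (mat2 a b c d) ** mat2 a b c d) = of_real (det_defect a b c d)"
  unfolding of_real_det_defect
  by (simp add: adj_mat2 mat2_mult mat_1_eq_mat2 mat2_diff det_2) algebra

lemma det_one_minus_mult_adj_mat2:
  "det (mat 1 - mat2 a b c d ** adj (mat2 a b c d)) = of_real (det_defect a b c d)"
  unfolding of_real_det_defect
  by (simp add: adj_mat2 mat2_mult mat_1_eq_mat2 mat2_diff det_2) algebra

lemma of_real_cmod_power2: "(complex_of_real (cmod z))\<^sup>2 = z * cnj z"
  using complex_norm_square [of z] by simp

lemma matrix_inv_one_minus_adj_mult_mat2:
  fixes a b c d :: complex
  defines "\<delta> \<equiv> complex_of_real (det_defect a b c d)"
  assumes "det_defect a b c d \<noteq> 0"
  shows "matrix_inv (mat 1 - adj (mat2 a b c d) ** mat2 a b c d) =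
    mat2 ((1 - (cnj b * b + cnj d * d)) / \<delta>) ((cnj a * b + cnj c * d) / \<delta>)
         ((cnj b * a + cnj d * c) / \<delta>) ((1 - (cnj a * a + cnj c * c)) / \<delta>)"
  using assms(2)
  by (simp add: matrix_inv_mat2 det_one_minus_adj_mult_mat2 \<delta>_def)
    (simp add: adj_mat2 mat2_mult mat_1_eq_mat2 mat2_diff)

lemma matrix_inv_one_minus_mult_adj_mat2:
  fixes a b c d :: complex
  defines "\<delta> \<equiv> complex_of_real (det_defect a b c d)"
  assumes "det_defect a b c d \<noteq> 0"
  shows "matrix_inv (mat 1 - mat2 a b c d ** adj (mat2 a b c d)) =
    mat2 ((1 - (c * cnj c + d * cnj d)) / \<delta>) ((a * cnj c + b * cnj d) / \<delta>)
         ((c * cnj a + d * cnj b) / \<delta>) ((1 - (a * cnj a + b * cnj b)) / \<delta>)"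
  using assms(2)
  by (simp add: matrix_inv_mat2 det_one_minus_mult_adj_mat2 \<delta>_def)
    (simp add: adj_mat2 mat2_mult mat_1_eq_mat2 mat2_diff)

lemma KZ_mat2:
  fixes a b c d :: complex and \<rho> :: real
  defines "\<Delta> \<equiv> det_defect a b c d" and "K \<equiv> KZ (mat2 a b c d) \<rho>"
  assumes "\<Delta> \<noteq> 0"
  shows "K $ 1 $ 1 = of_real (\<rho>\<^sup>2 + (1 - \<rho>\<^sup>2) * (1 - (cmod b)\<^sup>2 - (cmod d)\<^sup>2) / \<Delta>)"
    and "K $ 2 $ 2 = of_real ((1 - \<rho>\<^sup>2) * (1 - (cmod a)\<^sup>2 - (cmod b)\<^sup>2) / \<Delta> - 1)"
    and "K $ 1 $ 2 = of_real ((1 - \<rho>\<^sup>2) / \<Delta>) * (c + cnj b * (a * d - b * c))"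
    and "K $ 2 $ 1 = cnj (K $ 1 $ 2)"
proof -
  let ?Z = "mat2 a b c d"
  define \<delta> where "\<delta> = complex_of_real \<Delta>"
  have "\<delta> \<noteq> 0" "cnj \<delta> = \<delta>" using assms(3) by (simp_all add: \<delta>_def)
  have \<delta>_eq: "\<delta> = 1 - (a * cnj a + b * cnj b + c * cnj c + d * cnj d)
      + (a * d - b * c) * cnj (a * d - b * c)"
    by (simp add: \<delta>_def \<Delta>_def of_real_det_defect)
  have K: "K = mat2
      (((mat 1 - \<rho>\<^sup>2 *\<^sub>R (adj ?Z ** ?Z)) ** matrix_inv (mat 1 - adj ?Z ** ?Z)) $ 1 $ 1)
      ((((1 - \<rho>\<^sup>2) *\<^sub>R matrix_inv (mat 1 - ?Z ** adj ?Z)) ** ?Z) $ 2 $ 1)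
      ((((1 - \<rho>\<^sup>2) *\<^sub>R adj ?Z) ** matrix_inv (mat 1 - ?Z ** adj ?Z)) $ 1 $ 2)
      (((?Z ** adj ?Z - \<rho>\<^sup>2 *\<^sub>R mat 1) ** matrix_inv (mat 1 - ?Z ** adj ?Z)) $ 2 $ 2)"
    unfolding K_def KZ_def Let_def by (simp add: eq_mat2_iff)
  note inv =
    matrix_inv_one_minus_adj_mult_mat2 [OF assms(3) [unfolded \<Delta>_def], folded \<Delta>_def \<delta>_def]
    matrix_inv_one_minus_mult_adj_mat2 [OF assms(3) [unfolded \<Delta>_def], folded \<Delta>_def \<delta>_def]
  note entries = of_real_cmod_power2 adj_mat2 mat2_mult mat_1_eq_mat2 mat2_diff scaleR_mat2
    \<delta>_def [symmetric]
  show "K $ 1 $ 1 = of_real (\<rho>\<^sup>2 + (1 - \<rho>\<^sup>2) * (1 - (cmod b)\<^sup>2 - (cmod d)\<^sup>2) / \<Delta>)"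
    using \<open>\<delta> \<noteq> 0\<close> unfolding K inv by (simp add: entries field_simps) (simp add: \<delta>_eq, algebra)
  show "K $ 2 $ 2 = of_real ((1 - \<rho>\<^sup>2) * (1 - (cmod a)\<^sup>2 - (cmod b)\<^sup>2) / \<Delta> - 1)"
    using \<open>\<delta> \<noteq> 0\<close> unfolding K inv by (simp add: entries field_simps) (simp add: \<delta>_eq, algebra)
  show "K $ 1 $ 2 = of_real ((1 - \<rho>\<^sup>2) / \<Delta>) * (c + cnj b * (a * d - b * c))"
    using \<open>\<delta> \<noteq> 0\<close> unfolding K inv by (simp add: entries field_simps)
  show "K $ 2 $ 1 = cnj (K $ 1 $ 2)"
    using \<open>\<delta> \<noteq> 0\<close> \<open>cnj \<delta> = \<delta>\<close> unfolding K inv by (simp add: entries field_simps)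
qed

lemma det_defect_mult_one_minus_cmod_sq:
  "det_defect a b c d * (1 - (cmod b)\<^sup>2) =
     (1 - (cmod b)\<^sup>2 - (cmod d)\<^sup>2) * (1 - (cmod a)\<^sup>2 - (cmod b)\<^sup>2)
     - (cmod (c + cnj b * (a * d - b * c)))\<^sup>2"
proof -
  have "complex_of_real (det_defect a b c d * (1 - (cmod b)\<^sup>2)) =
        complex_of_real ((1 - (cmod b)\<^sup>2 - (cmod d)\<^sup>2) * (1 - (cmod a)\<^sup>2 - (cmod b)\<^sup>2)
          - (cmod (c + cnj b * (a * d - b * c)))\<^sup>2)"
    by (simp only: of_real_mult of_real_diff of_real_1 of_real_det_defect complex_norm_square)
      (simp, algebra)
  then show ?thesis by (simp only: of_real_eq_iff)
qed

lemma pos_def_imp_cmod_sq_less: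
  assumes "pos_def K" and "K $ 1 $ 1 = of_real k11" and "K $ 2 $ 2 = of_real k22"
    and "K $ 2 $ 1 = cnj (K $ 1 $ 2)"
  shows "(cmod (K $ 1 $ 2))\<^sup>2 < k11 * k22"
proof -
  let ?k = "K $ 1 $ 2"
  have pos: "0 < Re (\<Sum>i\<in>UNIV. \<Sum>j\<in>UNIV. cnj (v $ i) * K $ i $ j * v $ j)" if "v \<noteq> 0" for v
    using assms(1) that unfolding pos_def_def Let_def by blast
  define v1 :: "complex^2" where "v1 = (\<chi> i. if i = 1 then 1 else 0)"
  have "v1 \<noteq> 0" by (auto simp: v1_def vec_eq_iff)
  from pos [OF this] have "k11 > 0"
    by (simp add: sum_2 v1_def assms(2))
  define v2 :: "complex^2" where "v2 = (\<chi> i. if i = 1 then - ?k else of_real k11)"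
  have "v2 $ 2 \<noteq> 0" using \<open>k11 > 0\<close> by (simp add: v2_def)
  then have "v2 \<noteq> 0" by auto
  moreover have "(\<Sum>i\<in>UNIV. \<Sum>j\<in>UNIV. cnj (v2 $ i) * K $ i $ j * v2 $ j) =
      of_real (k11 * (k11 * k22 - (cmod ?k)\<^sup>2))"
    by (simp add: sum_2 v2_def assms(2-4) of_real_cmod_power2 algebra_simps)
  ultimately have "0 < k11 * (k11 * k22 - (cmod ?k)\<^sup>2)"
    using pos by fastforce
  then show ?thesis using \<open>k11 > 0\<close> by (simp add: zero_less_mult_iff)
qed

lemma KZ_mat2_not_pos_def:
  assumes "det_defect a b c d > 0" and "0 \<le> \<rho>" and "\<rho> < 1"
    and "(cmod d)\<^sup>2 \<le> \<rho>\<^sup>2 * (cmod a)\<^sup>2"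
  shows "\<not> pos_def (KZ (mat2 a b c d) \<rho>)"
proof
  assume "pos_def (KZ (mat2 a b c d) \<rho>)"
  define \<Delta> where "\<Delta> = det_defect a b c d"
  define s where "s = 1 - \<rho>\<^sup>2"
  define P where "P = 1 - (cmod b)\<^sup>2 - (cmod d)\<^sup>2"
  define Q where "Q = 1 - (cmod a)\<^sup>2 - (cmod b)\<^sup>2"
  define k where "k = c + cnj b * (a * d - b * c)"
  define k11 where "k11 = \<rho>\<^sup>2 + s * P / \<Delta>"
  define k22 where "k22 = s * Q / \<Delta> - 1"
  have "\<Delta> > 0" "s > 0"
    using assms(1-3) by (simp_all add: \<Delta>_def s_def power_less_one_iff abs_square_less_1)
  note K = KZ_mat2 [of a b c d \<rho>, folded \<Delta>_def s_def P_def Q_def k_def,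
      OF \<open>\<Delta> > 0\<close> [THEN dual_order.strict_implies_not_eq]]
  have pos: "(s / \<Delta>)\<^sup>2 * (cmod k)\<^sup>2 < k11 * k22"
    using pos_def_imp_cmod_sq_less [OF \<open>pos_def _\<close> K(1,2,4)] \<open>s > 0\<close> \<open>\<Delta> > 0\<close>
    by (simp add: K(3) k11_def k22_def norm_mult norm_divide power_mult_distrib power_divide)
  have cmod_k: "(cmod k)\<^sup>2 = P * Q - \<Delta> * (1 - (cmod b)\<^sup>2)"
    using det_defect_mult_one_minus_cmod_sq [of a b c d] by (simp add: \<Delta>_def P_def Q_def k_def)
  have det: "k11 * k22 - (s / \<Delta>)\<^sup>2 * (cmod k)\<^sup>2
      = (s * ((cmod d)\<^sup>2 - \<rho>\<^sup>2 * (cmod a)\<^sup>2) - \<rho>\<^sup>2 * \<Delta>) / \<Delta>"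
    unfolding cmod_k using \<open>\<Delta> > 0\<close> by (simp add: k11_def k22_def field_simps power2_eq_square s_def P_def Q_def)
  have "s * ((cmod d)\<^sup>2 - \<rho>\<^sup>2 * (cmod a)\<^sup>2) \<le> 0"
    using \<open>s > 0\<close> assms(4) by (simp add: mult_nonneg_nonpos)
  moreover have "0 \<le> \<rho>\<^sup>2 * \<Delta>" using \<open>\<Delta> > 0\<close> by simp
  ultimately have "s * ((cmod d)\<^sup>2 - \<rho>\<^sup>2 * (cmod a)\<^sup>2) - \<rho>\<^sup>2 * \<Delta> \<le> 0" by linarith
  then have "(s * ((cmod d)\<^sup>2 - \<rho>\<^sup>2 * (cmod a)\<^sup>2) - \<rho>\<^sup>2 * \<Delta>) / \<Delta> \<le> 0"
    using \<open>\<Delta> > 0\<close> by (rule divide_nonpos_pos)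
  with pos det show False by linarith
qed

section \<open>A lower bound for the sup norm of Phi_1\<close>

lemma Phi1_denominator_ge:
  assumes "cmod z \<le> 1"
  shows "3 - cmod y2 \<le> cmod (y2 * z - 3)"
proof -
  have "cmod (y2 * z) \<le> cmod y2" using assms by (simp add: norm_mult mult_left_le)
  moreover have "cmod (3::complex) - cmod (y2 * z) \<le> cmod (y2 * z - 3)"
    by (metis norm_minus_commute norm_triangle_ineq2)
  ultimately show ?thesis by simp
qed

lemma Phi1_Hinf_ge_boundary:
  assumes "cmod y2 < 3" and "y1 * y2 \<noteq> 9 * q" and "cmod u = 1"
  shows "cmod (3 * q * u - y1) \<le> Phi1_Hinf (y1, y2, q) * cmod (y2 * u - 3)"
proof -
  define M where "M = Phi1_Hinf (y1, y2, q)"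
  have Phi1: "Phi1 z (y1, y2, q) = (3 * q * z - y1) / (y2 * z - 3)" for z
    using assms(2) by (simp add: Phi1_def)
  have den_pos: "0 < cmod (y2 * z - 3)" if "cmod z \<le> 1" for z
    using Phi1_denominator_ge [OF that, of y2] assms(1) by linarith
  have "bdd_above ((\<lambda>z. cmod (Phi1 z (y1, y2, q))) ` ball 0 1)"
  proof (rule bdd_aboveI2)
    fix z :: complex assume "z \<in> ball 0 1"
    then have "cmod z \<le> 1" by simp
    have "cmod (3 * q * z) \<le> 3 * cmod q"
      using \<open>cmod z \<le> 1\<close> by (simp add: norm_mult mult_left_le)
    then have "cmod (3 * q * z - y1) \<le> 3 * cmod q + cmod y1"
      using norm_triangle_ineq4 [of "3 * q * z" y1] by linarith
    then show "cmod (Phi1 z (y1, y2, q)) \<le> (3 * cmod q + cmod y1) / (3 - cmod y2)"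
      unfolding Phi1 norm_divide
      using Phi1_denominator_ge [OF \<open>cmod z \<le> 1\<close>, of y2] assms(1) by (intro frac_le) auto
  qed
  then have "cmod (Phi1 z (y1, y2, q)) \<le> M" if "z \<in> ball 0 1" for z
    unfolding M_def Phi1_Hinf_def using that by (rule cSUP_upper2) simp
  then have inside: "cmod (3 * q * z - y1) - M * cmod (y2 * z - 3) \<le> 0" if "z \<in> ball 0 1" for z
    using that den_pos [of z] by (simp add: Phi1 norm_divide divide_le_eq)
  have "continuous_on (closure (ball 0 1)) (\<lambda>z. cmod (3 * q * z - y1) - M * cmod (y2 * z - 3))"
    by (intro continuous_intros)
  moreover have "u \<in> closure (ball 0 1)" using assms(3) by simp
  ultimately have "cmod (3 * q * u - y1) - M * cmod (y2 * u - 3) \<le> 0"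
    using inside by (rule continuous_le_on_closure)
  then show ?thesis by (simp add: M_def)
qed

lemma exists_boundary_point_ge:
  assumes "cmod q \<le> 1" and "cmod y2 \<le> cmod y1"
  obtains u :: complex where "cmod u = 1" and "cmod q * cmod (y2 * u - 3) \<le> cmod (3 * q * u - y1)"
proof -
  define B where "B = q * cnj y1 - (cmod q)\<^sup>2 * y2"
  obtain u :: complex where u: "u = 1 \<or> u = -1" "Re (u * B) \<le> 0"
    by (cases "Re B \<le> 0") (auto intro: that [of 1] that [of "-1"])
  have "(cmod (3 * q * u - y1))\<^sup>2 - (cmod q)\<^sup>2 * (cmod (y2 * u - 3))\<^sup>2
      = (cmod y1)\<^sup>2 - (cmod q)\<^sup>2 * (cmod y2)\<^sup>2 - 6 * Re (u * B)"
    using u(1) unfolding B_def cmod_power2 by (auto simp: algebra_simps power2_eq_square)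
  moreover have "(cmod q)\<^sup>2 * (cmod y2)\<^sup>2 \<le> 1 * (cmod y1)\<^sup>2"
    using assms by (intro mult_mono power_mono) (simp_all add: power_le_one)
  ultimately have "(cmod q * cmod (y2 * u - 3))\<^sup>2 \<le> (cmod (3 * q * u - y1))\<^sup>2"
    using u(2) by (simp add: power_mult_distrib)
  then have "cmod q * cmod (y2 * u - 3) \<le> cmod (3 * q * u - y1)"
    by (rule power2_le_imp_le) simp
  moreover have "cmod u = 1" using u(1) by auto
  ultimately show ?thesis by (rule that [rotated])
qed

lemma norm_le_Phi1_Hinf:
  assumes "cmod y2 < 3" and "cmod q \<le> 1" and "cmod y2 \<le> cmod y1" and "y1 * y2 \<noteq> 9 * q"
  shows "cmod q \<le> Phi1_Hinf (y1, y2, q)"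
proof -
  obtain u where "cmod u = 1" and u: "cmod q * cmod (y2 * u - 3) \<le> cmod (3 * q * u - y1)"
    using exists_boundary_point_ge assms(2,3) by blast
  have "0 < cmod (y2 * u - 3)"
    using Phi1_denominator_ge [of u y2] \<open>cmod u = 1\<close> assms(1) by linarith
  moreover have "cmod q * cmod (y2 * u - 3) \<le> Phi1_Hinf (y1, y2, q) * cmod (y2 * u - 3)"
    using u Phi1_Hinf_ge_boundary [OF assms(1,4) \<open>cmod u = 1\<close>] by linarith
  ultimately show ?thesis by simp
qed

lemma G3t_norm_bounds:
  assumes "(y1, y2, q) \<in> G3t"
  shows "cmod q < 1" and "cmod y2 < 3"
proof -
  obtain b1 b2 where y2: "y2 = b2 + cnj b1 * q" and "cmod q < 1" "cmod b1 + cmod b2 < 3"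
    using assms unfolding G3t_def by blast
  then show "cmod q < 1" by simp
  have "cmod y2 \<le> cmod b2 + cmod b1 * cmod q"
    unfolding y2 by (metis complex_mod_cnj norm_mult norm_triangle_ineq)
  also have "\<dots> \<le> cmod b2 + cmod b1" using \<open>cmod q < 1\<close> by (simp add: mult_left_le)
  finally show "cmod y2 < 3" using \<open>cmod b1 + cmod b2 < 3\<close> by simp
qed

section \<open>The matrices Z_nu\<close>

lemma add_inverse_less_between_roots:
  fixes t1 t2 x C :: real
  assumes "t1 \<noteq> 0" and "t2 \<noteq> 0" and "t1 \<noteq> t2"
    and "t1 + 1 / t1 = C" and "t2 + 1 / t2 = C"
    and "0 < x" and "t1 < x" and "x < t2"
  shows "x + 1 / x < C"
proof -
  have t1: "t1\<^sup>2 - C * t1 + 1 = 0" and t2: "t2\<^sup>2 - C * t2 + 1 = 0"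
    using assms(1,2,4,5) by (auto simp: field_simps power2_eq_square)
  then have "(t1 - t2) * (t1 + t2 - C) = 0" by (simp add: algebra_simps power2_eq_square)
  then have sum: "t1 + t2 = C" using assms(3) by simp
  have prod: "t1 * t2 = 1"
    using t1 by (simp add: sum [symmetric] algebra_simps power2_eq_square)
  have "x * x - C * x + 1 = (x - t1) * (x - t2)"
    using prod by (simp add: sum [symmetric] algebra_simps)
  also have "\<dots> < 0" using assms(7,8) by (simp add: mult_pos_neg)
  finally have "x * x + 1 < C * x" by simp
  then show ?thesis using assms(6) by (simp add: field_simps)
qed

lemma det_Z_nu:
  fixes nu :: real
  assumes "l0 \<noteq> 0" and "nu \<noteq> 0" and "w\<^sup>2 = (y1 * y2 - 9 * q) / (9 * l0)"
  shows "y1 / (3 * l0) * (y2 / 3) - complex_of_real nu * w * (w / complex_of_real nu) = q / l0"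
proof -
  have "y1 / (3 * l0) * (y2 / 3) - complex_of_real nu * w * (w / complex_of_real nu) =
      y1 * y2 / (9 * l0) - w\<^sup>2"
    using assms(2) by (simp add: power2_eq_square)
  also have "\<dots> = q / l0"
    unfolding assms(3) using assms(1) by (simp add: field_simps)
  finally show ?thesis .
qed

lemma det_defect_Z_nu:
  fixes nu :: real
  assumes "l0 \<noteq> 0" and "0 < nu" and "y1 * y2 \<noteq> 9 * q" and "w\<^sup>2 = (y1 * y2 - 9 * q) / (9 * l0)"
  shows "det_defect (y1 / (3 * l0)) (complex_of_real nu * w) (w / complex_of_real nu) (y2 / 3) =
    cmod (y1 * y2 - 9 * q) / (9 * cmod l0) *
    (cmod l0 / cmod (y1 * y2 - 9 * q) *
       (9 - (cmod y1)\<^sup>2 / (cmod l0)\<^sup>2 - (cmod y2)\<^sup>2 + 9 * (cmod q)\<^sup>2 / (cmod l0)\<^sup>2)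
     - (nu\<^sup>2 + 1 / nu\<^sup>2))"
proof -
  have w: "(cmod w)\<^sup>2 = cmod (y1 * y2 - 9 * q) / (9 * cmod l0)"
    using arg_cong [OF assms(4), of cmod] by (simp add: norm_power norm_divide norm_mult)
  have "(cmod (complex_of_real nu * w))\<^sup>2 + (cmod (w / complex_of_real nu))\<^sup>2 =
      (cmod w)\<^sup>2 * (nu\<^sup>2 + 1 / nu\<^sup>2)"
    using assms(2) by (simp add: norm_mult norm_divide power_mult_distrib power_divide field_simps)
  moreover have "cmod (y1 / (3 * l0) * (y2 / 3) - complex_of_real nu * w * (w / complex_of_real nu))
      = cmod q / cmod l0"
    using assms(2) by (simp only: det_Z_nu [OF assms(1) _ assms(4)] norm_divide)
  ultimately show ?thesis
    using assms(1,3)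
    by (simp add: det_defect_def w norm_divide norm_mult power_divide power_mult_distrib field_simps)
qed

theorem mainTheorem16:
  fixes l0 y1 y2 q w :: complex and th1 th2 :: real
  assumes "cmod l0 < 1" and "l0 \<noteq> 0"
    and "(y1, y2, q) \<in> G3t"
    and "y1 * y2 \<noteq> 9 * q"
    and "cmod y2 \<le> cmod y1"
    and "Phi1_Hinf (y1, y2, q) < cmod l0"
    and "w^2 = (y1 * y2 - 9 * q) / (9 * l0)"
    and "th1 \<noteq> 0" and "th2 \<noteq> 0" and "th1 \<noteq> th2"
    and "\<And>th. th \<in> {th1, th2} \<Longrightarrow> th + 1 / th =
           cmod l0 / cmod (y1 * y2 - 9 * q) *
           (9 - (cmod y1)^2 / (cmod l0)^2 - (cmod y2)^2 + 9 * (cmod q)^2 / (cmod l0)^2)"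
  shows "\<forall>nu::real. nu > 0 \<and> th1 < nu^2 \<and> nu^2 < th2 \<longrightarrow>
           (let Z = (\<chi> i j. if i = 1 \<and> j = 1 then y1 / (3 * l0)
                            else if i = 1 \<and> j = 2 then complex_of_real nu * w
                            else if i = 2 \<and> j = 1 then w / complex_of_real nu
                            else y2 / 3) :: cmat2
            in opnorm Z < 1 \<and> \<not> pos_def (KZ Z (cmod l0)))"
proof (intro allI impI, unfold Let_def mat2_def [symmetric])
  fix nu :: real
  assume nu: "nu > 0 \<and> th1 < nu^2 \<and> nu^2 < th2"
  let ?a = "y1 / (3 * l0)" and ?b = "complex_of_real nu * w"
  and ?c = "w / complex_of_real nu" and ?d = "y2 / 3"
  have "cmod q \<le> Phi1_Hinf (y1, y2, q)"
    using G3t_norm_bounds [OF assms(3)] assms(4,5) by (intro norm_le_Phi1_Hinf) simp_all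
  moreover have "?a * ?d - ?b * ?c = q / l0"
    using nu by (intro det_Z_nu [OF assms(2) _ assms(7)]) simp
  ultimately have "(cmod (?a * ?d - ?b * ?c))\<^sup>2 < 1"
    using assms(2,6) by (simp add: norm_divide abs_square_less_1)
  moreover have "0 < det_defect ?a ?b ?c ?d"
    using add_inverse_less_between_roots [OF assms(8-10) assms(11) assms(11)] nu assms(2,4)
    by (simp add: det_defect_Z_nu [OF assms(2) _ assms(4,7)])
  moreover have "(cmod ?d)\<^sup>2 \<le> (cmod l0)\<^sup>2 * (cmod ?a)\<^sup>2"
    using assms(2,5) by (simp add: norm_divide norm_mult power_divide power_mono)
  ultimately show "opnorm (mat2 ?a ?b ?c ?d) < 1 \<and> \<not> pos_def (KZ (mat2 ?a ?b ?c ?d) (cmod l0))"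
    using opnorm_mat2_less_one KZ_mat2_not_pos_def assms(1) by simp
qed

end
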